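(* Let $r$ and $d$ be positive integers, let $\operatorname{Tv}(d,r)=(d+1)(r-1)+1$, and let $S$ be a set of $n>\operatorname{Tv}(d,r)$ points in $\mathbb{R}^d$. Then every vertex $v$ of the Tverberg $r$-partition graph $G_T[S,r]$ satisfies \[\big(n+1-\operatorname{Tv}(d,r)\big)(r-1)\le \deg(v)\le n(r-1).\]
   Context: A partition of a finite set $S$ into $r$ parts is a collection of $r$ nonempty pairwise disjoint subsets $P_1,\dots,P_r$ (unordered) whose union is $S$. For a finite $S\subset\mathbb{R}^d$, a Tverberg partition of $S$ into $r$ parts is a partition $P_1,\dots,P_r$ of $S$ into $r$ parts with $\bigcap_{j=1}^r\operatorname{conv}(P_j)\neq\emptyset$. For two partitions $P,P'$ of $S$, the partition distance $D(P,P')$ is the minimum number of elements of $S$ that must be removed so that $P$ and $P'$ restricted to the remaining elements coincide. The Tverberg $r$-partition graph $G_T[S,r]$ has as vertices all Tverberg partitions of $S$ into $r$ parts, with an edge between $P$ and $P'$ if and only if $D(P,P')=1$. *)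

theory Defs
  imports "HOL-Analysis.Analysis" "HOL-Library.Disjoint_Sets"
begin

definition partition_r :: "'a set \<Rightarrow> nat \<Rightarrow> 'a set set \<Rightarrow> bool" where
  "partition_r S r P \<longleftrightarrow> partition_on S P \<and> finite P \<and> card P = r"

definition tverberg_partition :: "(real^'d) set \<Rightarrow> nat \<Rightarrow> (real^'d) set set \<Rightarrow> bool" where
  "tverberg_partition S r P \<longleftrightarrow> partition_r S r P \<and> (\<Inter>B\<in>P. convex hull B) \<noteq> {}"

definition restrict_partition :: "'a set set \<Rightarrow> 'a set \<Rightarrow> 'a set set" where
  "restrict_partition P Y = {B \<inter> Y | B. B \<in> P} - {{}}"

definition partition_distance :: "'a set \<Rightarrow> 'a set set \<Rightarrow> 'a set set \<Rightarrow> nat" where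
  "partition_distance S P P' =
     Min {card X | X. X \<subseteq> S \<and> restrict_partition P (S - X) = restrict_partition P' (S - X)}"

definition tverberg_graph_degree :: "(real^'d) set \<Rightarrow> nat \<Rightarrow> (real^'d) set set \<Rightarrow> nat" where
  "tverberg_graph_degree S r P =
     card {P'. tverberg_partition S r P' \<and> partition_distance S P P' = 1}"

definition Tv :: "nat \<Rightarrow> nat \<Rightarrow> nat" where
  "Tv d r = (d + 1) * (r - 1) + 1"

end

theory Submission
  imports Defs "HOL-Library.Function_Algebras"
begin

text \<open>
  A neighbour of P in the Tverberg graph arises by moving a single point x into another block C,
  so there are at most n(r - 1) neighbours. Conversely, call x removable if deleting x from its block
  B keeps a common point p of the convex hulls. Then moving x into any of the r - 1 other blocks C
  keeps p in every hull (as C \<subseteq> C \<union> {x}), and different moves give different partitions.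

  A Tverberg point is certified by nonnegative weights with sum 1 and barycentre p on every block.
  These weights form a polyhedron cut out by (d + 1)(r - 1) + 1 = Tv(d, r) linear equations, so a
  certificate of minimal support T has |T| \<le> Tv(d, r): otherwise a nonzero direction in the kernel,
  supported on T, would let us move towards the boundary and shrink the support. Every point outside T
  is removable. If |T| = Tv(d, r), adjoining any further point y yields a kernel direction that must
  involve y, and moving along it frees a point of T as well. Hence at least n + 1 - Tv(d, r) points are
  removable, each contributing r - 1 neighbours.
\<close>

section \<open>Partitions and moving a single point\<close>

lemma partition_on_blocks_disjoint:
  "partition_on S P \<Longrightarrow> D \<in> P \<Longrightarrow> E \<in> P \<Longrightarrow> D \<noteq> E \<Longrightarrow> D \<inter> E = {}"
  unfolding partition_on_def disjoint_def by blast

lemma partition_on_block_unique: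
  "partition_on S P \<Longrightarrow> B \<in> P \<Longrightarrow> B' \<in> P \<Longrightarrow> x \<in> B \<Longrightarrow> x \<in> B' \<Longrightarrow> B = B'"
  using partition_on_blocks_disjoint by blast

lemma partition_on_finite_block:
  assumes "partition_on S P" "finite S" "B \<in> P"
  shows "finite B"
proof -
  have "B \<subseteq> S"
    using assms(3) partition_onD1[OF assms(1)] by blast
  then show ?thesis
    using assms(2) by (rule finite_subset)
qed

lemma card_blocks_avoiding:
  assumes "partition_on S P" "finite P" "x \<in> S"
  shows "card {C \<in> P. x \<notin> C} = card P - 1"
proof -
  obtain B where B: "B \<in> P" "x \<in> B"
    using assms(1,3) partition_onD1 by blast
  then have "{C \<in> P. x \<notin> C} = P - {B}"
    using partition_on_block_unique[OF assms(1)] by blast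
  then show ?thesis
    using B assms(2) by simp
qed

lemma card_SIGMA_blocks_avoiding:
  assumes "partition_on S P" "finite P" "A \<subseteq> S" "finite A"
  shows "card (SIGMA x:A. {C \<in> P. x \<notin> C}) = card A * (card P - 1)"
  using assms by (simp add: card_SigmaI card_blocks_avoiding subset_iff)

lemma restrict_partition_on:
  "partition_on S P \<Longrightarrow> restrict_partition P (S - X) = (\<lambda>B. B - X) ` P - {{}}"
  unfolding restrict_partition_def partition_on_def by blast

lemma restrict_partition_on_self: "partition_on S P \<Longrightarrow> restrict_partition P S = P"
  using restrict_partition_on[of S P "{}"] partition_onD3[of S P] by simp

lemma partition_distance_eq_1_iff:
  assumes "finite S"
  shows "partition_distance S P P' = 1 \<longleftrightarrow>
    restrict_partition P S \<noteq> restrict_partition P' S \<and>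
    (\<exists>x\<in>S. restrict_partition P (S - {x}) = restrict_partition P' (S - {x}))"
proof -
  define A where "A = {card X | X. X \<subseteq> S \<and> restrict_partition P (S - X) = restrict_partition P' (S - X)}"
  have "finite A"
    unfolding A_def by (rule finite_subset[of _ "card ` Pow S"]) (use assms in auto)
  moreover have "card S \<in> A"
    unfolding A_def restrict_partition_def by auto
  ultimately have Min_A: "Min A = 1 \<longleftrightarrow> 1 \<in> A \<and> 0 \<notin> A"
    by (subst Min_eq_iff) (auto simp: Suc_le_eq intro: gr0I)
  have zero: "0 \<in> A \<longleftrightarrow> restrict_partition P S = restrict_partition P' S"
    unfolding A_def using assms by (auto intro!: exI[of _ "{}"] dest: finite_subset)
  have one: "1 \<in> A \<longleftrightarrow> (\<exists>x\<in>S. restrict_partition P (S - {x}) = restrict_partition P' (S - {x}))"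
  proof
    assume "1 \<in> A"
    then obtain X where "card X = 1" "X \<subseteq> S"
      "restrict_partition P (S - X) = restrict_partition P' (S - X)"
      unfolding A_def by auto
    moreover from \<open>card X = 1\<close> obtain x where "X = {x}"
      by (rule card_1_singletonE)
    ultimately show "\<exists>x\<in>S. restrict_partition P (S - {x}) = restrict_partition P' (S - {x})"
      by auto
  next
    assume "\<exists>x\<in>S. restrict_partition P (S - {x}) = restrict_partition P' (S - {x})"
    then obtain x where "x \<in> S" "restrict_partition P (S - {x}) = restrict_partition P' (S - {x})" ..
    then show "1 \<in> A"
      unfolding A_def by (auto intro!: exI[of _ "{x}"])
  qed
  show ?thesis
    unfolding partition_distance_def A_def[symmetric] Min_A zero one by blast
qed

text \<open>
  Only the restriction \<^term>\<open>(\<lambda>B. B - {x}) ` P - {{}}\<close> of P to the complement of x enters,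
  so every partition with the same restriction and the same number of blocks arises from P by
  moving x into a suitable C.
\<close>
definition move_point :: "'a set set \<Rightarrow> 'a \<Rightarrow> 'a set \<Rightarrow> 'a set set" where
  "move_point P x C = insert (insert x C) ((\<lambda>B. B - {x}) ` P - {C, {}})"

lemma move_point_restrict_cong:
  assumes "partition_on S P" "partition_on S P'"
    and "restrict_partition P (S - {x}) = restrict_partition P' (S - {x})"
  shows "move_point P x C = move_point P' x C"
proof -
  have "(\<lambda>B. B - {x}) ` P - {{}} = (\<lambda>B. B - {x}) ` P' - {{}}"
    using assms(3) unfolding restrict_partition_on[OF assms(1)] restrict_partition_on[OF assms(2)] .
  moreover have "X - {C, {}} = X - {{}} - {C}" for X :: "'a set set"
    by blast
  ultimately show ?thesis
    unfolding move_point_def by simp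
qed

lemma image_remove_point:
  assumes "partition_on S P" "B \<in> P" "x \<in> B"
  shows "(\<lambda>D. D - {x}) ` P = insert (B - {x}) (P - {B})"
proof -
  have "D - {x} = (if D = B then B - {x} else D)" if "D \<in> P" for D
    using that assms partition_on_block_unique[OF assms(1)] by auto
  then have "(\<lambda>D. D - {x}) ` P = (\<lambda>D. if D = B then B - {x} else D) ` P"
    by (rule image_cong[OF refl])
  then show ?thesis
    using assms(2) by auto
qed

lemma remove_point_notin_other_blocks:
  assumes "partition_on S P" "B \<in> P" "x \<in> B"
  shows "B - {x} \<notin> P - {B}"
proof
  assume "B - {x} \<in> P - {B}"
  moreover then obtain y where "y \<in> B - {x}"
    using partition_onD3[OF assms(1)] by (metis Diff_iff all_not_in_conv)
  ultimately show False
    using partition_on_block_unique[OF assms(1), of "B - {x}" B y] assms(2) by blast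
qed

lemma insert_point_notin_blocks:
  assumes "partition_on S P" "B \<in> P" "x \<in> B" "C \<in> P" "x \<notin> C"
  shows "insert x C \<notin> P"
proof
  assume "insert x C \<in> P"
  then have "insert x C = B"
    using partition_on_block_unique[OF assms(1) _ assms(2) _ assms(3)] by blast
  moreover have "B \<inter> C = {}"
    using partition_on_blocks_disjoint[OF assms(1,2,4)] assms(3,5) by blast
  ultimately have "C = {}"
    by blast
  then show False
    using assms(4) partition_onD3[OF assms(1)] by simp
qed

lemma move_point_own_block:
  assumes "partition_on S P" "B \<in> P" "x \<in> B"
  shows "move_point P x (B - {x}) = P"
proof -
  have "insert (B - {x}) (P - {B}) - {B - {x}, {}} = P - {B}"
    using remove_point_notin_other_blocks[OF assms] partition_onD3[OF assms(1)] by blast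
  moreover have "insert x (B - {x}) = B"
    using assms(3) by blast
  ultimately show ?thesis
    unfolding move_point_def image_remove_point[OF assms]
    using assms(2) by (simp add: insert_absorb)
qed

lemma move_point_other_block:
  assumes "partition_on S P" "B \<in> P" "x \<in> B" "B \<noteq> {x}" "C \<in> P" "x \<notin> C"
  shows "move_point P x C = insert (insert x C) (insert (B - {x}) (P - {B, C}))"
proof -
  have "B - {x} \<noteq> C" "B - {x} \<noteq> {}"
    using remove_point_notin_other_blocks[OF assms(1-3)] assms(3-6) by blast+
  then have "insert (B - {x}) (P - {B}) - {C, {}} = insert (B - {x}) (P - {B, C})"
    using partition_onD3[OF assms(1)] by blast
  then show ?thesis
    unfolding move_point_def image_remove_point[OF assms(1-3)] by simp
qed

lemma partition_on_move_point:
  assumes "partition_on S P" "B \<in> P" "x \<in> B" "B \<noteq> {x}" "C \<in> P" "x \<notin> C"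
  shows "partition_on S (move_point P x C)"
proof -
  let ?R = "P - {B, C}"
  note disj = partition_on_blocks_disjoint[OF assms(1)]
  have BC: "B \<inter> C = {}"
    using disj[OF assms(2,5)] assms(3,6) by blast
  have R: "insert x C \<inter> D = {}" "(B - {x}) \<inter> D = {}" if "D \<in> ?R" for D
    using that disj[of D B] disj[of D C] assms(2,3,5) by blast+
  have "\<Union>P = B \<union> C \<union> \<Union>?R"
    using assms(2,5) by blast
  then have "\<Union>(insert (insert x C) (insert (B - {x}) ?R)) = S"
    using assms(1,3) partition_onD1 by fastforce
  moreover have "disjnt D E" if "D \<in> insert (insert x C) (insert (B - {x}) ?R)"
    "E \<in> insert (insert x C) (insert (B - {x}) ?R)" "D \<noteq> E" for D E
    using that(1,2) unfolding disjnt_def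
    by (elim insertE) (use that(3) BC R disj in \<open>auto simp: Int_commute\<close>)
  moreover have "{} \<notin> insert (insert x C) (insert (B - {x}) ?R)"
    using assms(3,4) partition_onD3[OF assms(1)] by blast
  ultimately show ?thesis
    unfolding move_point_other_block[OF assms] by (rule partition_onI)
qed

lemma restrict_move_point:
  assumes "partition_on S P" "B \<in> P" "x \<in> B" "B \<noteq> {x}" "C \<in> P" "x \<notin> C"
  shows "restrict_partition (move_point P x C) (S - {x}) = restrict_partition P (S - {x})"
proof -
  let ?R = "P - {B, C}"
  have "B \<noteq> C"
    using assms(3,6) by blast
  have "(\<lambda>D. D - {x}) ` ?R = (\<lambda>D. D) ` ?R"
    by (rule image_cong[OF refl]) (use partition_on_block_unique[OF assms(1) _ assms(2) _ assms(3)] in blast)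
  then have "(\<lambda>D. D - {x}) ` move_point P x C = insert C (insert (B - {x}) ?R)"
    unfolding move_point_other_block[OF assms] using assms(6) by simp
  also have "\<dots> = (\<lambda>D. D - {x}) ` P"
  proof -
    have "C \<in> P - {B}"
      using assms(5) \<open>B \<noteq> C\<close> by simp
    then have "P - {B} = insert C ?R"
      unfolding Diff_insert2[of P B "{C}"] using insert_Diff by metis
    then show ?thesis
      unfolding image_remove_point[OF assms(1-3)] by (simp add: insert_commute)
  qed
  finally show ?thesis
    unfolding restrict_partition_on[OF partition_on_move_point[OF assms]] restrict_partition_on[OF assms(1)]
    by simp
qed

lemma move_point_neq:
  assumes "partition_on S P" "B \<in> P" "x \<in> B" "C \<in> P" "x \<notin> C"
  shows "move_point P x C \<noteq> P"
proof -
  have "insert x C \<in> move_point P x C"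
    unfolding move_point_def by simp
  then show ?thesis
    using insert_point_notin_blocks[OF assms] by metis
qed

lemma card_move_point:
  assumes "partition_on S P" "B \<in> P" "x \<in> B" "B \<noteq> {x}" "C \<in> P" "x \<notin> C" "finite P"
  shows "card (move_point P x C) = card P"
proof -
  have "B \<noteq> C"
    using assms(3,6) by blast
  moreover have "card {B, C} \<le> card P"
    using assms(2,5,7) by (intro card_mono) auto
  ultimately have "card (P - {B, C}) + 2 = card P"
    using assms(2,5,7) by (simp add: card_Diff_subset)
  moreover have "insert x C \<notin> insert (B - {x}) (P - {B, C})"
    using insert_point_notin_blocks[OF assms(1-3,5,6)] by blast
  moreover have "B - {x} \<notin> P - {B, C}"
    using remove_point_notin_other_blocks[OF assms(1-3)] by blast
  ultimately show ?thesis
    unfolding move_point_other_block[OF assms(1-6)] using assms(7) by simp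
qed

lemma card_move_point_singleton:
  assumes "partition_on S P" "B \<in> P" "x \<in> B" "B \<noteq> {x}" "finite P"
  shows "card (move_point P x {}) = card P + 1"
proof -
  have "B - {x} \<noteq> {}"
    using assms(3,4) by blast
  then have "move_point P x {} = insert {x} (insert (B - {x}) (P - {B}))"
    unfolding move_point_def image_remove_point[OF assms(1-3)]
    using partition_onD3[OF assms(1)] by auto
  moreover have "{x} \<notin> P - {B}"
    using partition_on_block_unique[OF assms(1) _ assms(2) _ assms(3)] by blast
  moreover have "{x} \<noteq> B - {x}"
    by blast
  moreover have "0 < card P"
    using assms(2,5) card_gt_0_iff by blast
  ultimately show ?thesis
    using remove_point_notin_other_blocks[OF assms(1-3)] assms(2,5) by (simp add: card_Diff_singleton)
qed

lemma partition_distance_move_point: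
  assumes "finite S" "partition_on S P" "B \<in> P" "x \<in> B" "B \<noteq> {x}" "C \<in> P" "x \<notin> C"
  shows "partition_distance S P (move_point P x C) = 1"
  unfolding partition_distance_eq_1_iff[OF assms(1)] restrict_partition_on_self[OF assms(2)]
    restrict_partition_on_self[OF partition_on_move_point[OF assms(2-7)]]
  using restrict_move_point[OF assms(2-7)] move_point_neq[OF assms(2-4,6,7)] assms(3,4) partition_onD1[OF assms(2)]
  by auto

lemma move_point_inj:
  assumes "partition_on S P"
    and "B \<in> P" "x \<in> B" "B \<noteq> {x}" "C \<in> P" "x \<notin> C"
    and "B' \<in> P" "x' \<in> B'" "B' \<noteq> {x'}" "C' \<in> P" "x' \<notin> C'"
    and "move_point P x C = move_point P x' C'"
  shows "x = x' \<and> C = C'"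
proof (cases "x = x'")
  case True
  have "insert x C \<in> move_point P x C"
    by (simp add: move_point_def)
  moreover have "insert x' C' \<in> move_point P x C"
    unfolding assms(12) by (simp add: move_point_def)
  ultimately have "insert x C = insert x C'"
    using partition_on_block_unique[OF partition_on_move_point[OF assms(1-6)]] True by blast
  then show ?thesis
    using True assms(6,11) by (simp add: insert_ident)
next
  case False
  \<comment> \<open>Restricted to the complement of x, the block \<open>insert x' C'\<close> of the moved partition must
    be \<open>B' - {x}\<close>; as C' is disjoint from B', this forces C' = {x} and then B' = {x'}.\<close>
  have "insert x' C' \<in> move_point P x C"
    unfolding assms(12) by (simp add: move_point_def)
  then have "insert x' C' - {x} \<in> restrict_partition (move_point P x C) (S - {x})"
    unfolding restrict_partition_on[OF partition_on_move_point[OF assms(1-6)]] using False by blast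
  then have "insert x' C' - {x} \<in> (\<lambda>D. D - {x}) ` P"
    unfolding restrict_move_point[OF assms(1-6)] restrict_partition_on[OF assms(1)] by blast
  then obtain D where "D \<in> P" "insert x' C' - {x} = D - {x}"
    by blast
  moreover have "x' \<in> D"
    using calculation(2) False by blast
  ultimately have B': "insert x' C' - {x} = B' - {x}"
    using partition_on_block_unique[OF assms(1) _ assms(7) _ assms(8)] by blast
  have "C' \<inter> B' = {}"
    using partition_on_blocks_disjoint[OF assms(1,10,7)] assms(8,11) by blast
  then have "C' \<subseteq> {x}"
    using B' by blast
  then have "C' = {x}"
    using assms(10) partition_onD3[OF assms(1)] by (metis subset_singletonD)
  then have "B' = {x'}"
    using B' \<open>C' \<inter> B' = {}\<close> assms(8) by blast
  then show ?thesis
    using assms(9) by blast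
qed

lemma eq_move_point_if_restrict_eq:
  assumes "partition_on S P" "partition_on S P'" "finite P" "card P' = card P" "x \<in> S"
    and "restrict_partition P (S - {x}) = restrict_partition P' (S - {x})" "P' \<noteq> P"
  shows "\<exists>C\<in>P. x \<notin> C \<and> P' = move_point P x C"
proof -
  obtain B where B: "B \<in> P" "x \<in> B"
    using assms(1,5) partition_onD1 by blast
  obtain B' where B': "B' \<in> P'" "x \<in> B'"
    using assms(2,5) partition_onD1 by blast
  define C where "C = B' - {x}"
  have P': "P' = move_point P x C"
    unfolding C_def move_point_restrict_cong[OF assms(1,2,6)] move_point_own_block[OF assms(2) B'] ..
  have "(\<lambda>D. D - {x}) ` P' - {{}} = (\<lambda>D. D - {x}) ` P - {{}}"
    using assms(6) unfolding restrict_partition_on[OF assms(1)] restrict_partition_on[OF assms(2)] ..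
  then have Q: "(\<lambda>D. D - {x}) ` P' - {{}} = insert (B - {x}) (P - {B}) - {{}}"
    unfolding image_remove_point[OF assms(1) B] .
  have "C \<in> (\<lambda>D. D - {x}) ` P'"
    unfolding C_def using B'(1) by (rule imageI)
  then have "C = {} \<or> C \<in> (\<lambda>D. D - {x}) ` P' - {{}}"
    by blast
  then have "C = {} \<or> C \<in> insert (B - {x}) (P - {B})"
    unfolding Q by blast
  then consider "C = B - {x}" | "C = {}" "B \<noteq> {x}" | "C \<in> P - {B}"
    by blast
  then show ?thesis
  proof cases
    case 1
    then show ?thesis
      using P' move_point_own_block[OF assms(1) B] assms(7) by simp
  next
    case 2
    then show ?thesis
      using P' card_move_point_singleton[OF assms(1) B _ assms(3)] assms(4) by simp
  next
    case 3
    then have "x \<notin> C"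
      using partition_on_block_unique[OF assms(1) _ B(1) _ B(2)] by blast
    then show ?thesis
      using 3 P' by blast
  qed
qed

section \<open>Linear dependence in spaces of functions\<close>

context vector_space
begin

lemma exists_nontrivial_relation_if_card_lt:
  assumes "finite T" "finite U" "card T < card U" "\<And>y. y \<in> U \<Longrightarrow> v y \<in> span T"
  shows "\<exists>w. (\<exists>y\<in>U. w y \<noteq> 0) \<and> (\<Sum>y\<in>U. scale (w y) (v y)) = 0"
proof (cases "inj_on v U")
  case False
  then obtain y1 y2 where y: "y1 \<in> U" "y2 \<in> U" "y1 \<noteq> y2" "v y1 = v y2"
    unfolding inj_on_def by blast
  define w where "w y = (if y = y1 then 1 else if y = y2 then -1 else (0::'a))" for y
  have "(\<Sum>y\<in>U. scale (w y) (v y)) = (\<Sum>y\<in>{y1, y2}. scale (w y) (v y))"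
    by (rule sum.mono_neutral_right) (use assms(2) y in \<open>auto simp: w_def\<close>)
  then show ?thesis
    using y by (intro exI[of _ w]) (auto simp: w_def)
next
  case True
  have "\<not> independent (v ` U)"
  proof
    assume "independent (v ` U)"
    moreover have "v ` U \<subseteq> span T"
      using assms(4) by blast
    ultimately have "card (v ` U) \<le> card T"
      using independent_span_bound[OF assms(1)] by blast
    then show False
      using card_image[OF True] assms(3) by simp
  qed
  then obtain u where "\<exists>z\<in>v ` U. u z \<noteq> 0" "(\<Sum>z\<in>v ` U. scale (u z) z) = 0"
    unfolding dependent_finite[OF finite_imageI[OF assms(2)]] by blast
  then show ?thesis
    by (intro exI[of _ "u \<circ> v"]) (auto simp: sum.reindex[OF True])
qed

end

lemma sum_fun_apply: "(\<Sum>i\<in>A. f i) x = (\<Sum>i\<in>A. f i x)"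
  by (induction A rule: infinite_finite_induct) auto

lemma exists_nontrivial_relation_fun:
  fixes v :: "'a \<Rightarrow> 'i \<Rightarrow> 'e::real_vector"
  assumes "finite U" "finite I" "\<And>i. i \<in> I \<Longrightarrow> finite (E i)"
    and "\<And>y i. y \<in> U \<Longrightarrow> i \<in> I \<Longrightarrow> v y i \<in> span (E i)"
    and "\<And>y i. y \<in> U \<Longrightarrow> i \<notin> I \<Longrightarrow> v y i = 0"
    and "(\<Sum>i\<in>I. card (E i)) < card U"
  shows "\<exists>w. (\<exists>y\<in>U. w y \<noteq> 0) \<and> (\<forall>i. (\<Sum>y\<in>U. w y *\<^sub>R v y i) = 0)"
proof -
  \<comment> \<open>There is no \<open>real_vector\<close> instance for functions, so the vector space structure of
    \<open>'i \<Rightarrow> 'e\<close> is interpreted locally.\<close>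
  interpret F: vector_space "\<lambda>c (f :: 'i \<Rightarrow> 'e) i. c *\<^sub>R f i"
    by unfold_locales (auto simp: fun_eq_iff algebra_simps)
  define single :: "'i \<Rightarrow> 'e \<Rightarrow> 'i \<Rightarrow> 'e" where "single i b = (\<lambda>j. if j = i then b else 0)" for i b
  have single_hom: "module_hom scaleR (\<lambda>c (f :: 'i \<Rightarrow> 'e) i. c *\<^sub>R f i) (single i)" for i
    by unfold_locales (auto simp: single_def fun_eq_iff algebra_simps)
  define T where "T = (\<Union>i\<in>I. single i ` E i)"
  have "finite T"
    unfolding T_def using assms(2,3) by blast
  have "card T \<le> (\<Sum>i\<in>I. card (single i ` E i))"
    unfolding T_def using assms(2) by (rule card_UN_le)
  also have "\<dots> \<le> (\<Sum>i\<in>I. card (E i))"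
    using assms(3) by (intro sum_mono card_image_le)
  finally have "card T < card U"
    using assms(6) by linarith
  have "v y \<in> F.span T" if "y \<in> U" for y
  proof -
    have "single i (v y i) \<in> F.span T" if "i \<in> I" for i
    proof -
      have "single i (v y i) \<in> single i ` span (E i)"
        using assms(4)[OF \<open>y \<in> U\<close> that] by (rule imageI)
      also have "\<dots> = F.span (single i ` E i)"
        unfolding span_raw_def by (rule module_hom.span_image[OF single_hom, symmetric])
      also have "\<dots> \<subseteq> F.span T"
        unfolding T_def using that by (intro F.span_mono) blast
      finally show ?thesis .
    qed
    then have "(\<Sum>i\<in>I. single i (v y i)) \<in> F.span T"
      by (rule F.span_sum)
    moreover have "(\<Sum>i\<in>I. single i (v y i)) = v y"
      using assms(2) assms(5)[OF that] by (auto simp: fun_eq_iff sum_fun_apply single_def)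
    ultimately show ?thesis
      by simp
  qed
  then obtain w where w: "\<exists>y\<in>U. w y \<noteq> 0" "(\<Sum>y\<in>U. (\<lambda>i. w y *\<^sub>R v y i)) = 0"
    using F.exists_nontrivial_relation_if_card_lt[OF \<open>finite T\<close> assms(1) \<open>card T < card U\<close>] by blast
  have "(\<Sum>y\<in>U. w y *\<^sub>R v y i) = 0" for i
    using fun_cong[OF w(2), of i] unfolding sum_fun_apply by (simp add: zero_fun_def)
  then show ?thesis
    using w(1) by blast
qed

section \<open>Tverberg weights\<close>

definition tverberg_weights :: "'a::real_vector set set \<Rightarrow> ('a \<Rightarrow> real) \<Rightarrow> 'a \<Rightarrow> bool" where
  "tverberg_weights P l p \<longleftrightarrow> (\<forall>B\<in>P. (\<forall>y\<in>B. 0 \<le> l y) \<and> sum l B = 1 \<and> (\<Sum>y\<in>B. l y *\<^sub>R y) = p)"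

definition tverberg_direction :: "'a::real_vector set set \<Rightarrow> ('a \<Rightarrow> real) \<Rightarrow> 'a \<Rightarrow> bool" where
  "tverberg_direction P w q \<longleftrightarrow> (\<forall>B\<in>P. sum w B = 0 \<and> (\<Sum>y\<in>B. w y *\<^sub>R y) = q)"

lemma tverberg_weights_exist:
  assumes "partition_on S P" "finite S" "\<forall>B\<in>P. p \<in> convex hull B"
  shows "\<exists>l. tverberg_weights P l p"
proof -
  have "\<exists>u. (\<forall>y\<in>B. 0 \<le> u y) \<and> sum u B = 1 \<and> (\<Sum>y\<in>B. u y *\<^sub>R y) = p" if "B \<in> P" for B
  proof -
    have "p \<in> convex hull B"
      using assms(3) that by blast
    then show ?thesis
      by (simp add: convex_hull_finite[OF partition_on_finite_block[OF assms(1,2) that]])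
  qed
  then obtain u where u: "\<And>B. B \<in> P \<Longrightarrow>
      (\<forall>y\<in>B. 0 \<le> u B y) \<and> sum (u B) B = 1 \<and> (\<Sum>y\<in>B. u B y *\<^sub>R y) = p"
    by metis
  define l where "l y = u (SOME B. B \<in> P \<and> y \<in> B) y" for y
  have l: "l y = u B y" if "B \<in> P" "y \<in> B" for B y
  proof -
    have "(SOME B. B \<in> P \<and> y \<in> B) = B"
    proof (rule some_equality)
      show "B \<in> P \<and> y \<in> B"
        using that ..
    qed (use partition_on_block_unique[OF assms(1) _ that(1) _ that(2)] in blast)
    then show ?thesis
      unfolding l_def by simp
  qed
  have "tverberg_weights P l p"
    unfolding tverberg_weights_def
  proof
    fix B assume "B \<in> P"
    then show "(\<forall>y\<in>B. 0 \<le> l y) \<and> sum l B = 1 \<and> (\<Sum>y\<in>B. l y *\<^sub>R y) = p"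
      using u[of B] l[of B] by (simp cong: sum.cong)
  qed
  then show ?thesis
    by blast
qed

lemma tverberg_weights_convex_hull:
  assumes "tverberg_weights P l p" "B \<in> P" "finite B" "{y \<in> B. l y \<noteq> 0} \<subseteq> A"
  shows "p \<in> convex hull A"
proof -
  have "sum l {y \<in> B. l y \<noteq> 0} = sum l B"
    by (rule sum.mono_neutral_left) (use assms(3) in auto)
  moreover have "(\<Sum>y\<in>{y \<in> B. l y \<noteq> 0}. l y *\<^sub>R y) = (\<Sum>y\<in>B. l y *\<^sub>R y)"
    by (rule sum.mono_neutral_left) (use assms(3) in auto)
  ultimately have "p \<in> convex hull {y \<in> B. l y \<noteq> 0}"
    using assms(1-3) unfolding tverberg_weights_def by (auto simp: convex_hull_finite)
  then show ?thesis
    using hull_mono[OF assms(4)] by blast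
qed

lemma tverberg_weights_add_direction:
  assumes "tverberg_weights P l p" "tverberg_direction P w q"
    and "\<forall>B\<in>P. \<forall>y\<in>B. 0 \<le> l y + t * w y"
  shows "tverberg_weights P (\<lambda>y. l y + t * w y) (p + t *\<^sub>R q)"
proof -
  have "(\<Sum>y\<in>B. (t * w y) *\<^sub>R y) = t *\<^sub>R (\<Sum>y\<in>B. w y *\<^sub>R y)" for B
    by (simp add: scaleR_sum_right)
  then show ?thesis
    using assms
    by (simp add: tverberg_weights_def tverberg_direction_def sum.distrib scaleR_add_left
        flip: sum_distrib_left)
qed

lemma tverberg_direction_uminus:
  "tverberg_direction P w q \<Longrightarrow> tverberg_direction P (\<lambda>y. - w y) (- q)"
  by (simp add: tverberg_direction_def sum_negf)

lemma tverberg_direction_negative_entry: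
  assumes "tverberg_direction P w q" "B \<in> P" "finite B" "z \<in> B" "0 < w z"
  shows "\<exists>y\<in>B. w y < 0"
proof (rule ccontr)
  assume "\<not> (\<exists>y\<in>B. w y < 0)"
  then have "0 < sum w B"
    using sum_pos2[of B z w, OF assms(3-5)] by (simp add: not_less)
  then show False
    using assms(1,2) unfolding tverberg_direction_def by simp
qed

lemma tverberg_weights_line_search_pos:
  assumes "partition_on S P" "finite S" "tverberg_weights P l p" "tverberg_direction P w q"
    and "z0 \<in> S" "0 < w z0"
  shows "\<exists>t z. z \<in> S \<and> w z < 0 \<and> l z + t * w z = 0
    \<and> tverberg_weights P (\<lambda>y. l y + t * w y) (p + t *\<^sub>R q)"
proof -
  have S: "S = \<Union>P"
    using assms(1) by (rule partition_onD1)
  have l_nonneg: "0 \<le> l y" if "y \<in> S" for y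
  proof -
    obtain B where "B \<in> P" "y \<in> B"
      using \<open>y \<in> S\<close> S by blast
    then show ?thesis
      using assms(3) unfolding tverberg_weights_def by blast
  qed
  define N where "N = {y \<in> S. w y < 0}"
  obtain B where B: "B \<in> P" "z0 \<in> B"
    using assms(5) S by blast
  then obtain y where "y \<in> B" "w y < 0"
    using tverberg_direction_negative_entry[OF assms(4) _ partition_on_finite_block[OF assms(1,2)]] assms(6)
    by blast
  then have "N \<noteq> {}"
    unfolding N_def using B(1) S by blast
  have "finite N"
    unfolding N_def using assms(2) by simp
  \<comment> \<open>the largest step along w that keeps every weight nonnegative\<close>
  define t where "t = Min ((\<lambda>y. l y / - w y) ` N)"
  have "t \<in> (\<lambda>y. l y / - w y) ` N"
    unfolding t_def using \<open>N \<noteq> {}\<close> \<open>finite N\<close> by (intro Min_in) auto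
  then obtain z where z: "z \<in> N" "t = l z / - w z"
    by blast
  have "0 \<le> l y + t * w y" if "y \<in> S" for y
  proof (cases "w y < 0")
    case True
    then have "t \<le> l y / - w y"
      unfolding t_def using \<open>finite N\<close> that by (intro Min_le) (auto simp: N_def)
    then show ?thesis
      using True by (simp add: field_simps)
  next
    case False
    have "0 \<le> t"
      using z l_nonneg unfolding N_def by (auto intro: divide_nonneg_neg)
    then show ?thesis
      using False l_nonneg[OF that] by simp
  qed
  then have "tverberg_weights P (\<lambda>y. l y + t * w y) (p + t *\<^sub>R q)"
    using S by (intro tverberg_weights_add_direction[OF assms(3,4)]) blast
  moreover have "l z + t * w z = 0"
    using z unfolding N_def by (simp add: field_simps)
  ultimately show ?thesis
    using z(1) unfolding N_def by blast
qed

lemma tverberg_weights_line_search: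
  assumes "partition_on S P" "finite S" "tverberg_weights P l p" "tverberg_direction P w q"
    and "z0 \<in> S" "w z0 \<noteq> 0"
  shows "\<exists>t z. z \<in> S \<and> w z * w z0 < 0 \<and> l z + t * w z = 0
    \<and> tverberg_weights P (\<lambda>y. l y + t * w y) (p + t *\<^sub>R q)"
proof (cases "0 < w z0")
  case True
  then obtain t z where "z \<in> S" "w z < 0" "l z + t * w z = 0"
    "tverberg_weights P (\<lambda>y. l y + t * w y) (p + t *\<^sub>R q)"
    using tverberg_weights_line_search_pos[OF assms(1-5)] by blast
  moreover have "w z * w z0 < 0"
    using True calculation(2) by (simp add: mult_neg_pos)
  ultimately show ?thesis
    by blast
next
  case False
  then have "0 < - w z0"
    using assms(6) by simp
  from tverberg_weights_line_search_pos[OF assms(1-3) tverberg_direction_uminus[OF assms(4)] assms(5) this]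
  obtain t z where "z \<in> S" "0 < w z" "l z + t * - w z = 0"
    "tverberg_weights P (\<lambda>y. l y + t * - w y) (p + t *\<^sub>R - q)"
    by auto
  then show ?thesis
    using \<open>0 < - w z0\<close> by (intro exI[of _ "- t"] exI[of _ z]) (auto simp: mult_pos_neg)
qed

lemma exists_tverberg_direction:
  fixes P :: "'a::euclidean_space set set"
  assumes "finite P" "P \<noteq> {}" "\<And>B. B \<in> P \<Longrightarrow> finite B" "finite U"
    and "(card P - 1) * (DIM('a) + 1) + 1 < card U"
  shows "\<exists>w q. (\<forall>y. w y \<noteq> 0 \<longrightarrow> y \<in> U) \<and> (\<exists>y. w y \<noteq> 0) \<and> tverberg_direction P w q"
proof -
  obtain B0 where "B0 \<in> P"
    using assms(2) by blast
  \<comment> \<open>A vanishing combination of the vectors v y is exactly a Tverberg direction: the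
    coordinate at B \<noteq> B0 compares the lifted sums \<open>\<Sum>y\<in>B. w y *\<^sub>R (y, 1)\<close> over B and B0, the
    coordinate at B0 only the weight sum over B0. These vectors lie in a space of dimension
    \<open>(card P - 1) * (DIM('a) + 1) + 1\<close>.\<close>
  define E :: "'a set \<Rightarrow> ('a \<times> real) set" where "E B = (if B = B0 then {(0, 1)} else Basis)" for B
  define v :: "'a \<Rightarrow> 'a set \<Rightarrow> 'a \<times> real" where
    "v y B = (if B = B0 then of_bool (y \<in> B0) *\<^sub>R (0, 1)
      else if B \<in> P then of_bool (y \<in> B) *\<^sub>R (y, 1) - of_bool (y \<in> B0) *\<^sub>R (y, 1) else 0)" for y B
  have "(\<Sum>B\<in>P. card (E B)) = card (E B0) + (\<Sum>B\<in>P - {B0}. card (E B))"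
    using assms(1) \<open>B0 \<in> P\<close> by (rule sum.remove)
  also have "\<dots> = (card P - 1) * (DIM('a) + 1) + 1"
    using assms(1) \<open>B0 \<in> P\<close> by (simp add: E_def)
  finally have "\<exists>w0. (\<exists>y\<in>U. w0 y \<noteq> 0) \<and> (\<forall>B. (\<Sum>y\<in>U. w0 y *\<^sub>R v y B) = 0)"
    using assms(5)
  proof (intro exists_nontrivial_relation_fun[OF assms(4,1)])
    show "v y B \<in> span (E B)" if "B \<in> P" for y B
    proof (cases "B = B0")
      case True
      have "of_bool (y \<in> B0) *\<^sub>R (0, 1) \<in> span {(0::'a, 1::real)}"
        by (intro span_mul span_base) simp
      then show ?thesis
        using True unfolding v_def E_def by (simp only: simp_thms if_True)
    qed (simp add: E_def)
    show "v y B = 0" if "B \<notin> P" for y B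
      using that \<open>B0 \<in> P\<close> by (auto simp: v_def)
  qed (auto simp: E_def)
  then obtain w0 where w0: "\<exists>y\<in>U. w0 y \<noteq> 0" "\<And>B. (\<Sum>y\<in>U. w0 y *\<^sub>R v y B) = 0"
    by blast
  define w where "w y = (if y \<in> U then w0 y else 0)" for y
  have combine: "(\<Sum>y\<in>U. w0 y *\<^sub>R (of_bool (y \<in> B) *\<^sub>R f y)) = (\<Sum>y\<in>B. w y *\<^sub>R f y)"
    if "B \<in> P" for B and f :: "'a \<Rightarrow> 'a \<times> real"
  proof -
    have "(\<Sum>y\<in>U. w0 y *\<^sub>R (of_bool (y \<in> B) *\<^sub>R f y)) = (\<Sum>y\<in>U \<inter> B. w y *\<^sub>R f y)"
      by (subst sum.inter_restrict[OF assms(4)]) (auto simp: w_def intro!: sum.cong)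
    also have "\<dots> = (\<Sum>y\<in>B. w y *\<^sub>R f y)"
      by (rule sum.mono_neutral_left) (use assms(3)[OF that] in \<open>auto simp: w_def\<close>)
    finally show ?thesis .
  qed
  have lifted: "(\<Sum>y\<in>B. w y *\<^sub>R (y, 1)) = ((\<Sum>y\<in>B. w y *\<^sub>R y), sum w B)" for B
    by (simp add: sum_prod)
  have "sum w B0 = 0"
    using w0(2)[of B0] combine[OF \<open>B0 \<in> P\<close>, of "\<lambda>_. (0, 1)"]
    by (simp add: v_def sum_prod zero_prod_def flip: scaleR_sum_left)
  moreover have "(\<Sum>y\<in>B. w y *\<^sub>R (y, 1::real)) = (\<Sum>y\<in>B0. w y *\<^sub>R (y, 1))" if "B \<in> P" for B
  proof (cases "B = B0")
    case False
    then have "v y B = of_bool (y \<in> B) *\<^sub>R (y, 1) - of_bool (y \<in> B0) *\<^sub>R (y, 1)" for y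
      using that by (simp add: v_def)
    then have "(\<Sum>y\<in>U. w0 y *\<^sub>R (of_bool (y \<in> B) *\<^sub>R (y, 1::real)))
        - (\<Sum>y\<in>U. w0 y *\<^sub>R (of_bool (y \<in> B0) *\<^sub>R (y, 1))) = 0"
      using w0(2)[of B] by (simp only: scaleR_diff_right sum_subtractf)
    then show ?thesis
      unfolding combine[OF that] combine[OF \<open>B0 \<in> P\<close>] by simp
  qed simp
  ultimately have "tverberg_direction P w (\<Sum>y\<in>B0. w y *\<^sub>R y)"
    unfolding tverberg_direction_def lifted by auto
  moreover have "\<exists>y. w y \<noteq> 0"
    using w0(1) by (auto simp: w_def)
  moreover have "\<forall>y. w y \<noteq> 0 \<longrightarrow> y \<in> U"
    by (simp add: w_def)
  ultimately show ?thesis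
    by blast
qed

lemma direction_vanishes_on_minimal_support:
  assumes "partition_on S P" "finite S" "tverberg_weights P l p"
    and min: "\<forall>l' p'. tverberg_weights P l' p' \<longrightarrow> card {y \<in> S. l y \<noteq> 0} \<le> card {y \<in> S. l' y \<noteq> 0}"
    and "tverberg_direction P w q" "\<And>y. w y \<noteq> 0 \<Longrightarrow> y \<in> S \<and> l y \<noteq> 0"
  shows "w y = 0"
proof (rule ccontr)
  assume "w y \<noteq> 0"
  then obtain t z where z: "z \<in> S" "w z * w y < 0" "l z + t * w z = 0"
    "tverberg_weights P (\<lambda>x. l x + t * w x) (p + t *\<^sub>R q)"
    using tverberg_weights_line_search[OF assms(1-3,5)] assms(6) by blast
  have "w z \<noteq> 0"
    using z(2) by auto
  then have "{x \<in> S. l x + t * w x \<noteq> 0} \<subset> {x \<in> S. l x \<noteq> 0}"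
    using assms(6) z(3) by fastforce
  then have "card {x \<in> S. l x + t * w x \<noteq> 0} < card {x \<in> S. l x \<noteq> 0}"
    using assms(2) by (simp add: psubset_card_mono)
  then show False
    using min z(4) by force
qed

lemma card_minimal_support_le:
  fixes P :: "'a::euclidean_space set set"
  assumes "partition_on S P" "finite S" "P \<noteq> {}" "tverberg_weights P l p"
    and min: "\<forall>l' p'. tverberg_weights P l' p' \<longrightarrow> card {y \<in> S. l y \<noteq> 0} \<le> card {y \<in> S. l' y \<noteq> 0}"
  shows "card {y \<in> S. l y \<noteq> 0} \<le> (card P - 1) * (DIM('a) + 1) + 1"
proof (rule ccontr)
  assume "\<not> ?thesis"
  then have "(card P - 1) * (DIM('a) + 1) + 1 < card {y \<in> S. l y \<noteq> 0}"
    by simp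
  moreover have "finite {y \<in> S. l y \<noteq> 0}"
    using assms(2) by simp
  ultimately obtain w q y where w: "\<forall>y. w y \<noteq> 0 \<longrightarrow> y \<in> {y \<in> S. l y \<noteq> 0}" "w y \<noteq> 0"
    "tverberg_direction P w q"
    using exists_tverberg_direction[OF finite_elements[OF assms(2,1)] assms(3)
        partition_on_finite_block[OF assms(1,2)]] by blast
  then show False
    using direction_vanishes_on_minimal_support[OF assms(1,2,4) min w(3), of y] by blast
qed

lemma minimal_support_exchange:
  fixes P :: "'a::euclidean_space set set"
  assumes "partition_on S P" "finite S" "P \<noteq> {}" "tverberg_weights P l p"
    and min: "\<forall>l' p'. tverberg_weights P l' p' \<longrightarrow> card {y \<in> S. l y \<noteq> 0} \<le> card {y \<in> S. l' y \<noteq> 0}"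
    and "card {y \<in> S. l y \<noteq> 0} = (card P - 1) * (DIM('a) + 1) + 1" "y \<in> S" "l y = 0"
  shows "\<exists>z\<in>S. l z \<noteq> 0 \<and> (\<exists>l' p'. tverberg_weights P l' p' \<and> l' z = 0)"
proof -
  let ?T = "{y \<in> S. l y \<noteq> 0}"
  have "finite (insert y ?T)"
    using assms(2) by simp
  moreover have "(card P - 1) * (DIM('a) + 1) + 1 < card (insert y ?T)"
    using assms(2,6-8) by simp
  ultimately obtain w q where w: "\<forall>x. w x \<noteq> 0 \<longrightarrow> x \<in> insert y ?T" "\<exists>x. w x \<noteq> 0"
    "tverberg_direction P w q"
    using exists_tverberg_direction[OF finite_elements[OF assms(2,1)] assms(3)
        partition_on_finite_block[OF assms(1,2)]] by blast
  \<comment> \<open>By minimality, w cannot live on the support of l alone.\<close>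
  have "w y \<noteq> 0"
  proof
    assume "w y = 0"
    then have "x \<in> S \<and> l x \<noteq> 0" if "w x \<noteq> 0" for x
      using w(1) that by blast
    then show False
      using direction_vanishes_on_minimal_support[OF assms(1,2,4) min w(3)] w(2) by blast
  qed
  then obtain t z where z: "z \<in> S" "w z * w y < 0" "l z + t * w z = 0"
    "tverberg_weights P (\<lambda>x. l x + t * w x) (p + t *\<^sub>R q)"
    using tverberg_weights_line_search[OF assms(1,2,4) w(3) assms(7)] by blast
  have "z \<noteq> y" "w z \<noteq> 0"
    using z(2) not_square_less_zero[of "w y"] by auto
  then have "l z \<noteq> 0"
    using w(1) by blast
  then show ?thesis
    using z by blast
qed

lemma card_vanishing_points_ge:
  fixes P :: "'a::euclidean_space set set"
  assumes "partition_on S P" "finite S" "P \<noteq> {}" "\<forall>B\<in>P. p \<in> convex hull B"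
    and "(card P - 1) * (DIM('a) + 1) + 1 < card S"
  shows "card S + 1 - ((card P - 1) * (DIM('a) + 1) + 1)
    \<le> card {x \<in> S. \<exists>l p. tverberg_weights P l p \<and> l x = 0}"
proof -
  define K where "K = (card P - 1) * (DIM('a) + 1) + 1"
  define V where "V = {x \<in> S. \<exists>l p. tverberg_weights P l p \<and> l x = 0}"
  obtain l0 where "tverberg_weights P l0 p"
    using tverberg_weights_exist[OF assms(1,2,4)] by blast
  then obtain l p' where lp: "tverberg_weights P l p'"
    and min: "\<forall>l' p''. tverberg_weights P l' p'' \<longrightarrow> card {y \<in> S. l y \<noteq> 0} \<le> card {y \<in> S. l' y \<noteq> 0}"
    using ex_has_least_nat[of "\<lambda>(l, p). tverberg_weights P l p" "(l0, p)" "\<lambda>(l, p). card {y \<in> S. l y \<noteq> 0}"]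
    by auto
  define T where "T = {y \<in> S. l y \<noteq> 0}"
  have "finite T" "T \<subseteq> S" "card T \<le> K"
    unfolding T_def K_def using assms(2) card_minimal_support_le[OF assms(1-3) lp min] by auto
  have "S - T \<subseteq> V"
    unfolding V_def T_def using lp by blast
  show ?thesis
  proof (cases "card T < K")
    case True
    have "card S + 1 - K \<le> card (S - T)"
      using True \<open>finite T\<close> \<open>T \<subseteq> S\<close> by (simp add: card_Diff_subset)
    also have "\<dots> \<le> card V"
      using \<open>S - T \<subseteq> V\<close> assms(2) unfolding V_def by (intro card_mono) auto
    finally show ?thesis
      unfolding K_def V_def .
  next
    case False
    then have "card T = K"
      using \<open>card T \<le> K\<close> by simp
    then have "T \<noteq> S"
      using assms(5) unfolding K_def by (metis less_irrefl)
    then obtain y where y: "y \<in> S" "y \<notin> T"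
      using \<open>T \<subseteq> S\<close> by blast
    moreover have "l y = 0"
      using y unfolding T_def by blast
    ultimately obtain z where "z \<in> S" "l z \<noteq> 0" "\<exists>l' p'. tverberg_weights P l' p' \<and> l' z = 0"
      using minimal_support_exchange[OF assms(1-3) lp min \<open>card T = K\<close>[unfolded T_def K_def]]
      by blast
    then have z: "z \<in> T" "z \<in> V"
      unfolding T_def V_def by blast+
    have "card S + 1 - K = card (insert z (S - T))"
      using z(1) \<open>finite T\<close> \<open>T \<subseteq> S\<close> \<open>card T = K\<close> assms(2) card_mono[OF assms(2) \<open>T \<subseteq> S\<close>]
      by (simp add: card_Diff_subset)
    also have "\<dots> \<le> card V"
      using \<open>S - T \<subseteq> V\<close> z(2) assms(2) unfolding V_def by (intro card_mono) auto
    finally show ?thesis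
      unfolding K_def V_def .
  qed
qed

section \<open>Degree bounds in the Tverberg graph\<close>

lemma tverberg_partition_move_point:
  assumes "tverberg_partition S r P" "B \<in> P" "x \<in> B" "C \<in> P" "x \<notin> C"
    and "\<forall>D\<in>P. p \<in> convex hull D" "p \<in> convex hull (B - {x})"
  shows "tverberg_partition S r (move_point P x C)"
proof -
  have P: "partition_on S P" "finite P" "card P = r"
    using assms(1) unfolding tverberg_partition_def partition_r_def by auto
  have "B \<noteq> {x}"
    using assms(7) by auto
  note F = move_point_other_block[OF P(1) assms(2,3) \<open>B \<noteq> {x}\<close> assms(4,5)]
  have "p \<in> convex hull D" if D: "D \<in> move_point P x C" for D
  proof -
    consider "D = insert x C" | "D = B - {x}" | "D \<in> P"
      using D unfolding F by blast
    then show ?thesis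
    proof cases
      case 1
      then show ?thesis
        using assms(4,6) hull_mono[of C D] by blast
    qed (use assms(6,7) in blast)+
  qed
  then show ?thesis
    unfolding tverberg_partition_def partition_r_def
    using partition_on_move_point[OF P(1) assms(2,3) \<open>B \<noteq> {x}\<close> assms(4,5)]
      card_move_point[OF P(1) assms(2,3) \<open>B \<noteq> {x}\<close> assms(4,5) P(2)] P(2,3)
    by (auto simp: F)
qed

lemma tverberg_partition_move_vanishing_point:
  assumes "finite S" "tverberg_partition S r P" "tverberg_weights P l p" "l x = 0" "B \<in> P" "x \<in> B"
  shows "B \<noteq> {x} \<and> (\<forall>C\<in>P. x \<notin> C \<longrightarrow> tverberg_partition S r (move_point P x C))"
proof -
  have P: "partition_on S P"
    using assms(2) unfolding tverberg_partition_def partition_r_def by blast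
  have "{y \<in> B. l y \<noteq> 0} \<subseteq> B - {x}"
    using assms(4) by blast
  then have "p \<in> convex hull (B - {x})"
    using tverberg_weights_convex_hull[OF assms(3,5) partition_on_finite_block[OF P assms(1,5)]] by blast
  moreover have "\<forall>D\<in>P. p \<in> convex hull D"
    using tverberg_weights_convex_hull[OF assms(3) _ partition_on_finite_block[OF P assms(1)]] by blast
  ultimately show ?thesis
    using tverberg_partition_move_point[OF assms(2,5,6)] by auto
qed

lemma tverberg_graph_degree_le:
  assumes "finite S" "tverberg_partition S r P"
  shows "tverberg_graph_degree S r P \<le> card S * (r - 1)"
proof -
  have P: "partition_on S P" "finite P" "card P = r"
    using assms(2) unfolding tverberg_partition_def partition_r_def by auto
  let ?N = "{P'. tverberg_partition S r P' \<and> partition_distance S P P' = 1}"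
  let ?M = "SIGMA x:S. {C \<in> P. x \<notin> C}"
  have "?N \<subseteq> (\<lambda>(x, C). move_point P x C) ` ?M"
  proof
    fix P' assume "P' \<in> ?N"
    then have P': "partition_on S P'" "card P' = card P"
      and "partition_distance S P P' = 1"
      using P(3) unfolding tverberg_partition_def partition_r_def by auto
    then obtain x where "x \<in> S" "P' \<noteq> P"
      "restrict_partition P (S - {x}) = restrict_partition P' (S - {x})"
      unfolding partition_distance_eq_1_iff[OF assms(1)] restrict_partition_on_self[OF P(1)]
        restrict_partition_on_self[OF P'(1)] by auto
    then obtain C where "C \<in> P" "x \<notin> C" "P' = move_point P x C"
      using eq_move_point_if_restrict_eq[OF P(1) P'(1) P(2) P'(2)] by blast
    then show "P' \<in> (\<lambda>(x, C). move_point P x C) ` ?M"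
      using \<open>x \<in> S\<close> by force
  qed
  moreover have "finite ?M"
    using assms(1) P(2) by simp
  ultimately have "card ?N \<le> card ((\<lambda>(x, C). move_point P x C) ` ?M)"
    by (intro card_mono) auto
  also have "\<dots> \<le> card ?M"
    using \<open>finite ?M\<close> by (rule card_image_le)
  finally show ?thesis
    unfolding tverberg_graph_degree_def
    using card_SIGMA_blocks_avoiding[OF P(1,2) order_refl assms(1)] P(3) by simp
qed

lemma tverberg_graph_degree_ge:
  assumes "finite S" "tverberg_partition S r P"
  shows "card {x \<in> S. \<exists>l p. tverberg_weights P l p \<and> l x = 0} * (r - 1) \<le> tverberg_graph_degree S r P"
proof -
  have P: "partition_on S P" "finite P" "card P = r"
    using assms(2) unfolding tverberg_partition_def partition_r_def by auto
  define V where "V = {x \<in> S. \<exists>l p. tverberg_weights P l p \<and> l x = 0}"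
  let ?N = "{P'. tverberg_partition S r P' \<and> partition_distance S P P' = 1}"
  let ?M = "SIGMA x:V. {C \<in> P. x \<notin> C}"
  have V: "\<exists>B. B \<in> P \<and> x \<in> B \<and> B \<noteq> {x}
      \<and> (\<forall>C\<in>P. x \<notin> C \<longrightarrow> tverberg_partition S r (move_point P x C))" if "x \<in> V" for x
  proof -
    obtain l p where lp: "tverberg_weights P l p" "l x = 0"
      using \<open>x \<in> V\<close> unfolding V_def by blast
    have "x \<in> \<Union>P"
      using \<open>x \<in> V\<close> partition_onD1[OF P(1)] unfolding V_def by simp
    then obtain B where "B \<in> P" "x \<in> B"
      by blast
    then show ?thesis
      using tverberg_partition_move_vanishing_point[OF assms lp] by blast
  qed
  have "move_point P x C \<in> ?N" if xC: "x \<in> V" "C \<in> P" "x \<notin> C" for x C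
  proof -
    obtain B where B: "B \<in> P" "x \<in> B" "B \<noteq> {x}"
      and "tverberg_partition S r (move_point P x C)"
      using V[OF xC(1)] xC(2,3) by blast
    moreover have "partition_distance S P (move_point P x C) = 1"
      using partition_distance_move_point[OF assms(1) P(1) B xC(2,3)] .
    ultimately show ?thesis
      by blast
  qed
  then have sub: "(\<lambda>(x, C). move_point P x C) ` ?M \<subseteq> ?N"
    by auto
  have inj: "inj_on (\<lambda>(x, C). move_point P x C) ?M"
  proof (rule inj_onI, clarify)
    fix x C x' C' assume "x \<in> V" "C \<in> P" "x \<notin> C" "x' \<in> V" "C' \<in> P" "x' \<notin> C'"
      and eq: "move_point P x C = move_point P x' C'"
    obtain B where B: "B \<in> P" "x \<in> B" "B \<noteq> {x}"
      using V[OF \<open>x \<in> V\<close>] by blast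
    obtain B' where B': "B' \<in> P" "x' \<in> B'" "B' \<noteq> {x'}"
      using V[OF \<open>x' \<in> V\<close>] by blast
    show "x = x' \<and> C = C'"
      by (rule move_point_inj[OF P(1) B \<open>C \<in> P\<close> \<open>x \<notin> C\<close> B' \<open>C' \<in> P\<close> \<open>x' \<notin> C'\<close> eq])
  qed
  have "finite ?N"
    by (rule finite_subset[of _ "{P'. partition_on S P'}"])
      (use finitely_many_partition_on[OF assms(1)] in \<open>auto simp: tverberg_partition_def partition_r_def\<close>)
  have "V \<subseteq> S"
    unfolding V_def by blast
  then have "card V * (r - 1) = card ?M"
    using card_SIGMA_blocks_avoiding[OF P(1,2) _ finite_subset[OF _ assms(1)]] P(3) by simp
  also have "\<dots> = card ((\<lambda>(x, C). move_point P x C) ` ?M)"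
    using inj by (rule card_image[symmetric])
  also have "\<dots> \<le> card ?N"
    using \<open>finite ?N\<close> sub by (rule card_mono)
  finally show ?thesis
    unfolding tverberg_graph_degree_def V_def .
qed

theorem theorem1p5:
  fixes S :: "(real^'d) set" and r n :: nat and P :: "(real^'d) set set"
  assumes "r \<ge> 1"
    and "finite S" and "card S = n"
    and "n > Tv CARD('d) r"
    and "tverberg_partition S r P"
  shows "(n + 1 - Tv CARD('d) r) * (r - 1) \<le> tverberg_graph_degree S r P
         \<and> tverberg_graph_degree S r P \<le> n * (r - 1)"
proof
  have P: "partition_on S P" "card P = r"
    using assms(5) unfolding tverberg_partition_def partition_r_def by auto
  obtain p where "\<forall>B\<in>P. p \<in> convex hull B"
    using assms(5) unfolding tverberg_partition_def by blast
  moreover have "P \<noteq> {}"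
    using P(2) assms(1) by auto
  moreover have "Tv CARD('d) r = (card P - 1) * (DIM(real^'d) + 1) + 1"
    using P(2) by (simp add: Tv_def)
  ultimately have "n + 1 - Tv CARD('d) r \<le> card {x \<in> S. \<exists>l p. tverberg_weights P l p \<and> l x = 0}"
    using card_vanishing_points_ge[OF P(1) assms(2)] assms(3,4) by simp
  then show "(n + 1 - Tv CARD('d) r) * (r - 1) \<le> tverberg_graph_degree S r P"
    using tverberg_graph_degree_ge[OF assms(2,5)] by (meson mult_le_mono1 order_trans)
  show "tverberg_graph_degree S r P \<le> n * (r - 1)"
    using tverberg_graph_degree_le[OF assms(2,5)] assms(3) by simp
qed

end
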